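(* Let $A\in\mathbb{Z}^{d\times n}$, $\mathbf{b}\in\mathbb{Z}^d$, $\mathbf{c}\in\mathbb{Z}^n$, $\mathbf{u}\in\mathbb{Z}_{\ge0}^n$. In any sequence of discrete steepest-descent augmentations $\mathbf{x}_{k+1}=\mathbf{x}_k+\alpha_k\mathbf{z}_k$ ($\mathbf{z}_k\in\mathcal{G}(A)$) for the ILP $\min\{\mathbf{c}^\top\mathbf{x} : A\mathbf{x}=\mathbf{b},\ \mathbf{0}\le\mathbf{x}\le\mathbf{u},\ \mathbf{x}\in\mathbb{Z}^n\}$, the directions $\mathbf{z}_k$ are pairwise distinct. Consequently the number of discrete steepest-descent augmentations needed to reach an optimal solution is at most $|\mathcal{G}(A)|$, independently of $\mathbf{b}$, $\mathbf{c}$, $\mathbf{u}$ and the initial feasible solution.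
   Context: For $\mathbf{v},\mathbf{w}\in\mathbb{R}^n$ write $\mathbf{v}\sqsubseteq\mathbf{w}$ if $v_iw_i\ge0$ and $|v_i|\le|w_i|$ for all $i$; the Graver basis $\mathcal{G}(A)$ is the set of $\sqsubseteq$-minimal elements of $(\ker(A)\cap\mathbb{Z}^n)\setminus\{\mathbf{0}\}$. Feasible means $A\mathbf{x}=\mathbf{b}$, $\mathbf{0}\le\mathbf{x}\le\mathbf{u}$, $\mathbf{x}\in\mathbb{Z}^n$. Discrete steepest-descent augmentation (ILP): given a feasible $\mathbf{x}_k$, choose $\mathbf{z}_k\in\mathcal{G}(A)$ maximizing $-\mathbf{c}^\top\mathbf{z}/\|\mathbf{z}\|_1$ among all $\mathbf{z}\in\mathcal{G}(A)$ with $\mathbf{x}_k+\mathbf{z}$ feasible; if this maximum is positive, let $\alpha_k$ be the largest integer with $\mathbf{x}_k+\alpha_k\mathbf{z}_k$ feasible and set $\mathbf{x}_{k+1}:=\mathbf{x}_k+\alpha_k\mathbf{z}_k$, otherwise stop. *)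

theory Defs
  imports "HOL-Analysis.Analysis"
begin

definition idot :: "int ^ 'n \<Rightarrow> int ^ 'n \<Rightarrow> int" where
  "idot c x = (\<Sum>i\<in>UNIV. c $ i * x $ i)"

definition norm1 :: "int ^ 'n \<Rightarrow> int" where
  "norm1 z = (\<Sum>i\<in>UNIV. \<bar>z $ i\<bar>)"

definition conf_le :: "int ^ 'n \<Rightarrow> int ^ 'n \<Rightarrow> bool" where
  "conf_le v w \<longleftrightarrow> (\<forall>i. v $ i * w $ i \<ge> 0 \<and> \<bar>v $ i\<bar> \<le> \<bar>w $ i\<bar>)"

definition graver :: "int ^ 'n ^ 'd \<Rightarrow> (int ^ 'n) set" where
  "graver A = {z. A *v z = 0 \<and> z \<noteq> 0 \<and>
       \<not> (\<exists>w. A *v w = 0 \<and> w \<noteq> 0 \<and> w \<noteq> z \<and> conf_le w z)}"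

definition feasible :: "int ^ 'n ^ 'd \<Rightarrow> int ^ 'd \<Rightarrow> int ^ 'n \<Rightarrow> int ^ 'n \<Rightarrow> bool" where
  "feasible A b u x \<longleftrightarrow> A *v x = b \<and> (\<forall>i. 0 \<le> x $ i \<and> x $ i \<le> u $ i)"

definition optimal :: "int ^ 'n ^ 'd \<Rightarrow> int ^ 'd \<Rightarrow> int ^ 'n \<Rightarrow> int ^ 'n \<Rightarrow> int ^ 'n \<Rightarrow> bool" where
  "optimal A b u c x \<longleftrightarrow> feasible A b u x \<and> (\<forall>y. feasible A b u y \<longrightarrow> idot c x \<le> idot c y)"

definition sd_ratio :: "int ^ 'n \<Rightarrow> int ^ 'n \<Rightarrow> real" where
  "sd_ratio c z = - real_of_int (idot c z) / real_of_int (norm1 z)"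

definition sd_step :: "int ^ 'n ^ 'd \<Rightarrow> int ^ 'd \<Rightarrow> int ^ 'n \<Rightarrow> int ^ 'n \<Rightarrow>
                        int ^ 'n \<Rightarrow> int ^ 'n \<Rightarrow> int \<Rightarrow> bool" where
  "sd_step A b u c x z \<alpha> \<longleftrightarrow>
     z \<in> graver A \<and> feasible A b u (x + z) \<and>
     (\<forall>z'\<in>graver A. feasible A b u (x + z') \<longrightarrow> sd_ratio c z' \<le> sd_ratio c z) \<and>
     sd_ratio c z > 0 \<and>
     feasible A b u (x + \<alpha> *s z) \<and>
     (\<forall>\<beta>::int. feasible A b u (x + \<beta> *s z) \<longrightarrow> \<beta> \<le> \<alpha>)"

definition sd_stops :: "int ^ 'n ^ 'd \<Rightarrow> int ^ 'd \<Rightarrow> int ^ 'n \<Rightarrow> int ^ 'n \<Rightarrow> int ^ 'n \<Rightarrow> bool" where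
  "sd_stops A b u c x \<longleftrightarrow> (\<forall>z\<in>graver A. feasible A b u (x + z) \<longrightarrow> sd_ratio c z \<le> 0)"

end

theory Submission
  imports Defs
begin

(*
  Everything rests on one local fact about a feasible point x
  (feasible_ratio_bound): if every feasible Graver move g from x has gain
  -c.g <= R |g|_1, then so does every feasible move v from x, since v decomposes
  conformally into Graver elements, each again a feasible move.  Consequently
  (1) along a run the ratios of the directions are non-increasing, and
  (2) a steepest step  x + alpha z  admits no continuation W of gain at least
      r |W|_1 (r the ratio of z) with  x + (alpha+1) z + W  feasible: the bound
      would be tight, forcing  (alpha+1) z  to be conformal to this feasible move,
      against the maximality of alpha (sd_step_no_tight_extension).
  If z_i = z_j with i < j, then by (1) all ratios on [i,j] coincide and the steps
  strictly between i and j form such a continuation, contradicting (2).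
*)

lemma matrix_vector_mult_smult: "(A::int^'n^'d) *v (a *s z) = a *s (A *v z)"
  by (simp add: vec_eq_iff matrix_vector_mult_def sum_distrib_left algebra_simps)

lemma idot_add: "idot c (x + y) = idot c x + idot c y"
  by (simp add: idot_def sum.distrib distrib_left)

lemma idot_diff: "idot c (x - y) = idot c x - idot c y"
  by (simp add: idot_def sum_subtractf right_diff_distrib)

lemma idot_smult: "idot c (a *s z) = a * idot c z"
  by (simp add: idot_def sum_distrib_left algebra_simps)

lemma idot_zero [simp]: "idot c 0 = 0"
  by (simp add: idot_def)

lemma idot_sum: "idot c (\<Sum>m\<in>M. w m) = (\<Sum>m\<in>M. idot c (w m))"
  by (induction M rule: infinite_finite_induct) (simp_all add: idot_add)

lemma norm1_nonneg: "norm1 z \<ge> 0"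
  by (simp add: norm1_def sum_nonneg)

lemma norm1_zero [simp]: "norm1 0 = 0"
  by (simp add: norm1_def)

lemma norm1_pos: "z \<noteq> 0 \<Longrightarrow> norm1 z > 0"
proof -
  assume "z \<noteq> 0"
  then obtain i where i: "z $ i \<noteq> 0" by (auto simp: vec_eq_iff)
  have "\<bar>z $ i\<bar> \<le> norm1 z" unfolding norm1_def by (rule member_le_sum) auto
  with i show ?thesis by simp
qed

lemma norm1_add_le: "norm1 (x + y) \<le> norm1 x + norm1 y"
  unfolding norm1_def by (simp add: sum.distrib[symmetric] sum_mono abs_triangle_ineq)

lemma norm1_smult: "norm1 (a *s z) = \<bar>a\<bar> * norm1 z"
  by (simp add: norm1_def sum_distrib_left abs_mult)

lemma norm1_sum_le: "norm1 (\<Sum>m\<in>M. w m) \<le> (\<Sum>m\<in>M. norm1 (w m))"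
proof (induction M rule: infinite_finite_induct)
  case (insert m M)
  then show ?case using norm1_add_le[of "w m" "\<Sum>m\<in>M. w m"] by simp
qed simp_all

subsection \<open>The conformal order\<close>

lemma conf_le_refl: "conf_le v v"
  by (simp add: conf_le_def)

lemma conf_le_trans: "conf_le a b \<Longrightarrow> conf_le b c \<Longrightarrow> conf_le a c"
  unfolding conf_le_def by (smt (verit, ccfv_threshold) mult_nonneg_nonpos zero_le_mult_iff)

lemma conf_le_diff: "conf_le w v \<Longrightarrow> conf_le (v - w) v"
  unfolding conf_le_def by (smt (verit, best) mult_nonneg_nonpos vector_minus_component zero_le_mult_iff)

lemma conf_le_norm1_split: "conf_le w v \<Longrightarrow> norm1 v = norm1 w + norm1 (v - w)"
  unfolding conf_le_def norm1_def sum.distrib[symmetric]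
proof (rule sum.cong)
  fix i
  assume "\<forall>i. 0 \<le> w $ i * v $ i \<and> \<bar>w $ i\<bar> \<le> \<bar>v $ i\<bar>"
  then have "0 \<le> w $ i * v $ i" "\<bar>w $ i\<bar> \<le> \<bar>v $ i\<bar>" by auto
  then show "\<bar>v $ i\<bar> = \<bar>w $ i\<bar> + \<bar>(v - w) $ i\<bar>"
    by (simp add: zero_le_mult_iff) (smt (verit))
qed simp

lemma conf_le_of_norm1_additive:
  assumes "norm1 (p + w) = norm1 p + norm1 w"
  shows "conf_le p (p + w)"
proof -
  have coord: "\<bar>p $ l + w $ l\<bar> = \<bar>p $ l\<bar> + \<bar>w $ l\<bar>" for l
  proof (rule sum_mono_inv[where f="\<lambda>l. \<bar>p $ l + w $ l\<bar>" and g="\<lambda>l. \<bar>p $ l\<bar> + \<bar>w $ l\<bar>"])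
    show "(\<Sum>l\<in>UNIV. \<bar>p $ l + w $ l\<bar>) = (\<Sum>l\<in>UNIV. \<bar>p $ l\<bar> + \<bar>w $ l\<bar>)"
      using assms unfolding norm1_def by (simp add: sum.distrib)
  qed (auto simp: abs_triangle_ineq)
  show ?thesis unfolding conf_le_def
  proof
    fix l
    show "0 \<le> p $ l * (p + w) $ l \<and> \<bar>p $ l\<bar> \<le> \<bar>(p + w) $ l\<bar>"
      using coord[of l] by (simp add: zero_le_mult_iff) (smt (verit))
  qed
qed

subsection \<open>The Graver basis\<close>

lemma graver_kernel_nonzero: "g \<in> graver A \<Longrightarrow> A *v g = 0 \<and> g \<noteq> 0"
  by (simp add: graver_def)

text \<open>Every nonzero kernel element has a Graver element conformally below it
  (induction on the 1-norm, which strictly decreases along the conformal order).\<close>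

lemma exists_graver_below:
  fixes A :: "int^'n^'d"
  shows "A *v v = 0 \<Longrightarrow> v \<noteq> 0 \<Longrightarrow> \<exists>g\<in>graver A. conf_le g v"
proof (induction "nat (norm1 v)" arbitrary: v rule: less_induct)
  case less
  show ?case
  proof (cases "v \<in> graver A")
    case True then show ?thesis using conf_le_refl by blast
  next
    case False
    then obtain w where w: "A *v w = 0" "w \<noteq> 0" "w \<noteq> v" "conf_le w v"
      using less.prems unfolding graver_def by blast
    have "norm1 w < norm1 v"
      using conf_le_norm1_split[OF w(4)] norm1_pos[of "v - w"] w(3) by simp
    then have "nat (norm1 w) < nat (norm1 v)" using norm1_nonneg[of w] by simp
    with less.hyps w obtain g where "g \<in> graver A" "conf_le g w" by blast
    then show ?thesis using conf_le_trans w(4) by blast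
  qed
qed

text \<open>Every other element lies below the
  chosen s0 in some coordinate, so the set is covered by finitely many slices fixing one
  coordinate, each of which is an antichain on fewer coordinates.\<close>

lemma pointwise_antichain_finite:
  fixes S :: "('a \<Rightarrow> nat) set"
  assumes "finite I"
    and "\<forall>f\<in>S. \<forall>g\<in>S. (\<forall>i\<in>I. f i \<le> g i) \<longrightarrow> f = g"
  shows "finite S"
  using assms
proof (induction "card I" arbitrary: I S rule: less_induct)
  case less
  show ?case
  proof (cases "S = {}")
    case False
    then obtain s0 where s0: "s0 \<in> S" by auto
    let ?slice = "\<lambda>i v. {f\<in>S. f i = v}"
    have cover: "S \<subseteq> {s0} \<union> (\<Union>i\<in>I. \<Union>v\<in>{..<s0 i}. ?slice i v)"
    proof
      fix f assume f: "f \<in> S"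
      show "f \<in> {s0} \<union> (\<Union>i\<in>I. \<Union>v\<in>{..<s0 i}. ?slice i v)"
      proof (cases "f = s0")
        case False
        with less.prems(2) s0 f obtain i where "i \<in> I" "f i < s0 i"
          by (metis not_le)
        with f show ?thesis by auto
      qed simp
    qed
    have "finite (?slice i v)" if i: "i \<in> I" for i v
    proof -
      have "card (I - {i}) < card I" using i less.prems(1) by (metis card_Diff1_less)
      moreover have "\<forall>f\<in>?slice i v. \<forall>g\<in>?slice i v. (\<forall>j\<in>I - {i}. f j \<le> g j) \<longrightarrow> f = g"
      proof (intro ballI impI)
        fix f g assume f: "f \<in> ?slice i v" and g: "g \<in> ?slice i v"
          and le: "\<forall>j\<in>I - {i}. f j \<le> g j"
        have "\<forall>j\<in>I. f j \<le> g j"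
        proof
          fix j assume "j \<in> I"
          then show "f j \<le> g j" using le f g by (cases "j = i") auto
        qed
        with less.prems(2) f g show "f = g" by auto
      qed
      ultimately show ?thesis using less.hyps[of "I - {i}"] less.prems(1) by auto
    qed
    then have "finite ({s0} \<union> (\<Union>i\<in>I. \<Union>v\<in>{..<s0 i}. ?slice i v))"
      using less.prems(1) by auto
    then show ?thesis using cover finite_subset by blast
  qed simp
qed

text \<open>The Graver basis is finite: within each sign pattern the Graver elements are
  determined by their absolute values, and these form a pointwise antichain.\<close>

lemma graver_finite: "finite (graver (A::int^'n^'d))"
proof -
  let ?sign = "\<lambda>g::int^'n. {i. g $ i < 0}"
  let ?abs = "\<lambda>g::int^'n. \<lambda>i. nat \<bar>g $ i\<bar>"
  have "finite {g\<in>graver A. ?sign g = s}" for s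
  proof -
    let ?G = "{g\<in>graver A. ?sign g = s}"
    have same_sign: "(g $ i < 0) = (h $ i < 0)" if "g \<in> ?G" "h \<in> ?G" for g h i
      using that by auto
    have inj: "inj_on ?abs ?G"
    proof (rule inj_onI)
      fix g h assume g: "g \<in> ?G" and h: "h \<in> ?G" and e: "?abs g = ?abs h"
      show "g = h"
      proof (subst vec_eq_iff, rule allI)
        fix i
        have "\<bar>g $ i\<bar> = \<bar>h $ i\<bar>" using fun_cong[OF e, of i] by simp
        with same_sign[OF g h, of i] show "g $ i = h $ i" by (auto simp: abs_if split: if_splits)
      qed
    qed
    have "finite (?abs ` ?G)"
    proof (rule pointwise_antichain_finite[of UNIV], simp, intro ballI impI)
      fix F H assume "F \<in> ?abs ` ?G" "H \<in> ?abs ` ?G" and le: "\<forall>i\<in>UNIV. F i \<le> H i"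
      then obtain g h where g: "g \<in> ?G" "F = ?abs g" and h: "h \<in> ?G" "H = ?abs h" by auto
      have "conf_le g h" unfolding conf_le_def
      proof
        fix i
        have "nat \<bar>g $ i\<bar> \<le> nat \<bar>h $ i\<bar>" using le g h by auto
        then have "\<bar>g $ i\<bar> \<le> \<bar>h $ i\<bar>" by simp
        with same_sign[OF g(1) h(1), of i] show "0 \<le> g $ i * h $ i \<and> \<bar>g $ i\<bar> \<le> \<bar>h $ i\<bar>"
          by (auto simp: zero_le_mult_iff)
      qed
      then have "g = h" using g(1) h(1) unfolding graver_def by auto
      then show "F = H" using g h by simp
    qed
    then show ?thesis using inj finite_imageD by blast
  qed
  then have "finite (\<Union>s. {g\<in>graver A. ?sign g = s})" by simp
  moreover have "graver A \<subseteq> (\<Union>s. {g\<in>graver A. ?sign g = s})" by auto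
  ultimately show ?thesis using finite_subset by blast
qed

lemma feasible_move_kernel:
  "feasible A b u x \<Longrightarrow> feasible A b u (x + v) \<Longrightarrow> A *v v = 0"
  unfolding feasible_def by (simp add: matrix_vector_right_distrib)

text \<open>A kernel vector conformal to a feasible move is itself a feasible move
  (each coordinate moves in the same direction, but not as far).\<close>

lemma feasible_conf_le:
  assumes "feasible A b u x" "feasible A b u (x + v)" "conf_le w v" "A *v w = 0"
  shows "feasible A b u (x + w)"
  using assms unfolding feasible_def conf_le_def
  by (simp add: matrix_vector_right_distrib) (smt (verit) zero_le_mult_iff)

lemma sd_ratio_gain: "z \<noteq> 0 \<Longrightarrow> - real_of_int (idot c z) = sd_ratio c z * real_of_int (norm1 z)"
  using norm1_pos[of z] unfolding sd_ratio_def by simp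

lemma sd_ratio_le_iff:
  assumes "z \<noteq> 0"
  shows "sd_ratio c z \<le> R \<longleftrightarrow> - real_of_int (idot c z) \<le> R * real_of_int (norm1 z)"
  using sd_ratio_gain[OF assms, of c] norm1_pos[OF assms] by (simp add: mult_le_cancel_right)

lemma sd_ratio_gain_smult:
  assumes "z \<noteq> 0" "a \<ge> 0"
  shows "- real_of_int (idot c (a *s z)) = sd_ratio c z * real_of_int (norm1 (a *s z))"
  using sd_ratio_gain[OF assms(1), of c] assms(2)
  by (simp add: idot_smult norm1_smult) (metis mult.left_commute mult_minus_right)

text \<open>Split v = g + (v - g) conformally with g in the Graver
  basis; both parts are feasible moves, and the 1-norm and the gain are additive.\<close>

lemma feasible_ratio_bound:
  fixes A :: "int^'n^'d"
  assumes fx: "feasible A b u x"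
    and graver_bound: "\<forall>g\<in>graver A. feasible A b u (x + g) \<longrightarrow>
                         - real_of_int (idot c g) \<le> R * real_of_int (norm1 g)"
  shows "feasible A b u (x + v) \<Longrightarrow> - real_of_int (idot c v) \<le> R * real_of_int (norm1 v)"
proof (induction "nat (norm1 v)" arbitrary: v rule: less_induct)
  case less
  show ?case
  proof (cases "v = 0")
    case False
    have kv: "A *v v = 0" using feasible_move_kernel[OF fx less.prems] .
    obtain g where g: "g \<in> graver A" "conf_le g v" using exists_graver_below[OF kv False] by blast
    have kg: "A *v g = 0" and g0: "g \<noteq> 0" using graver_kernel_nonzero[OF g(1)] by auto
    have rest_feasible: "feasible A b u (x + (v - g))"
      using feasible_conf_le[OF fx less.prems conf_le_diff[OF g(2)]] kv kg
      by (simp add: matrix_vector_mult_diff_distrib)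
    have split: "norm1 v = norm1 g + norm1 (v - g)" using conf_le_norm1_split[OF g(2)] .
    then have "nat (norm1 (v - g)) < nat (norm1 v)" using norm1_pos[OF g0] norm1_nonneg[of "v - g"] by simp
    then have "- real_of_int (idot c (v - g)) \<le> R * real_of_int (norm1 (v - g))"
      using less.hyps rest_feasible by blast
    moreover have "- real_of_int (idot c g) \<le> R * real_of_int (norm1 g)"
      using graver_bound g(1) feasible_conf_le[OF fx less.prems g(2) kg] by blast
    moreover have "idot c v = idot c g + idot c (v - g)" using idot_add[of c g "v - g"] by simp
    ultimately show ?thesis using split by (simp add: algebra_simps)
  qed simp
qed

lemma sum_exact_ratio_gain:
  assumes "\<rho> \<ge> 0"
    and exact: "\<And>m. m \<in> M \<Longrightarrow> - real_of_int (idot c (w m)) = \<rho> * real_of_int (norm1 (w m))"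
  shows "\<rho> * real_of_int (norm1 (\<Sum>m\<in>M. w m)) \<le> - real_of_int (idot c (\<Sum>m\<in>M. w m))"
proof -
  have "\<rho> * real_of_int (norm1 (\<Sum>m\<in>M. w m)) \<le> \<rho> * (\<Sum>m\<in>M. real_of_int (norm1 (w m)))"
    using norm1_sum_le[of w M] assms(1) by (simp add: mult_left_mono flip: of_int_sum)
  also have "\<dots> = (\<Sum>m\<in>M. - real_of_int (idot c (w m)))"
    using exact by (simp add: sum_distrib_left)
  also have "\<dots> = - real_of_int (idot c (\<Sum>m\<in>M. w m))"
    by (simp add: idot_sum sum_negf)
  finally show ?thesis .
qed

lemma sd_step_direction:
  assumes "sd_step A b u c x z \<alpha>"
  shows "z \<in> graver A" "z \<noteq> 0" "A *v z = 0" "sd_ratio c z > 0"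
  using assms graver_kernel_nonzero unfolding sd_step_def by auto

lemma sd_step_feasible:
  assumes "sd_step A b u c x z \<alpha>"
  shows "feasible A b u (x + z)" "feasible A b u (x + \<alpha> *s z)"
  using assms unfolding sd_step_def by auto

lemma sd_step_length_max:
  "sd_step A b u c x z \<alpha> \<Longrightarrow> feasible A b u (x + \<beta> *s z) \<Longrightarrow> \<beta> \<le> \<alpha>"
  unfolding sd_step_def by blast

lemma sd_step_length_pos: "sd_step A b u c x z \<alpha> \<Longrightarrow> \<alpha> \<ge> 1"
  using sd_step_length_max[of A b u c x z \<alpha> 1] sd_step_feasible(1)[of A b u c x z \<alpha>] by simp

lemma sd_step_steepest:
  assumes "sd_step A b u c x z \<alpha>"
  shows "\<forall>g\<in>graver A. feasible A b u (x + g) \<longrightarrow>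
           - real_of_int (idot c g) \<le> sd_ratio c z * real_of_int (norm1 g)"
  using assms graver_kernel_nonzero sd_ratio_le_iff unfolding sd_step_def by blast

text \<open>The next direction is no steeper: a Graver move z' feasible after the step gives the
  feasible move  alpha z + z'  at x, whose gain is bounded by r = sd_ratio c z.\<close>

lemma sd_step_ratio_antitone:
  assumes step: "sd_step A b u c x z \<alpha>" and fx: "feasible A b u x"
    and z': "z' \<in> graver A" "feasible A b u (x + \<alpha> *s z + z')"
  shows "sd_ratio c z' \<le> sd_ratio c z"
proof -
  note dir = sd_step_direction[OF step]
  let ?r = "sd_ratio c z" and ?v = "\<alpha> *s z + z'"
  have "- real_of_int (idot c ?v) \<le> ?r * real_of_int (norm1 ?v)"
    using feasible_ratio_bound[OF fx sd_step_steepest[OF step]] z'(2) by (simp add: add.assoc)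
  also have "\<dots> \<le> ?r * (real_of_int (norm1 (\<alpha> *s z)) + real_of_int (norm1 z'))"
    using norm1_add_le[of "\<alpha> *s z" z'] dir(4) by (simp flip: of_int_add)
  finally have "- real_of_int (idot c z') \<le> ?r * real_of_int (norm1 z')"
    using sd_ratio_gain_smult[OF dir(2), of \<alpha> c] sd_step_length_pos[OF step]
    by (simp add: idot_add algebra_simps)
  then show ?thesis using sd_ratio_le_iff graver_kernel_nonzero[OF z'(1)] by blast
qed

text \<open>A steepest step cannot be extended by a continuation W of gain at least
  r |W|_1 such that  x + (alpha+1) z + W  is feasible: the ratio bound at x is then
  tight, the 1-norm is additive on  (alpha+1) z + W,  so  (alpha+1) z  is conformal to
  a feasible move and the step length alpha was not maximal.\<close>

lemma sd_step_no_tight_extension: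
  assumes step: "sd_step A b u c x z \<alpha>" and fx: "feasible A b u x"
    and tight: "sd_ratio c z * real_of_int (norm1 W) \<le> - real_of_int (idot c W)"
    and fD: "feasible A b u (x + ((\<alpha> + 1) *s z + W))"
  shows False
proof -
  note dir = sd_step_direction[OF step]
  define \<rho> where "\<rho> = sd_ratio c z"
  define P where "P = (\<alpha> + 1) *s z"
  have "\<rho> * (real_of_int (norm1 P) + real_of_int (norm1 W)) \<le> - real_of_int (idot c (P + W))"
    using sd_ratio_gain_smult[OF dir(2), of "\<alpha> + 1" c] sd_step_length_pos[OF step] tight
    unfolding P_def \<rho>_def by (simp add: idot_add algebra_simps)
  also have "\<dots> \<le> \<rho> * real_of_int (norm1 (P + W))"
    using feasible_ratio_bound[OF fx sd_step_steepest[OF step]] fD unfolding P_def \<rho>_def by blast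
  finally have "norm1 P + norm1 W \<le> norm1 (P + W)"
    using dir(4) unfolding \<rho>_def by (simp add: mult_le_cancel_left flip: of_int_add)
  then have "norm1 (P + W) = norm1 P + norm1 W" using norm1_add_le[of P W] by linarith
  then have "conf_le P (P + W)" by (rule conf_le_of_norm1_additive)
  moreover have "A *v P = 0" unfolding P_def matrix_vector_mult_smult using dir(3) by simp
  ultimately have "feasible A b u (x + (\<alpha> + 1) *s z)"
    using feasible_conf_le[OF fx] fD unfolding P_def by blast
  then show False using sd_step_length_max[OF step] by fastforce
qed

subsection \<open>Runs of steepest descent\<close>

locale sd_run =
  fixes A :: "int ^ 'n ^ 'd" and b :: "int ^ 'd" and c u :: "int ^ 'n"
    and x z :: "nat \<Rightarrow> int ^ 'n" and \<alpha> :: "nat \<Rightarrow> int" and N :: nat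
  assumes x0: "feasible A b u (x 0)"
    and steps: "\<forall>k<N. sd_step A b u c (x k) (z k) (\<alpha> k) \<and> x (Suc k) = x k + \<alpha> k *s z k"
begin

lemma sd_step_at: "k < N \<Longrightarrow> sd_step A b u c (x k) (z k) (\<alpha> k)"
  and x_Suc: "k < N \<Longrightarrow> x (Suc k) = x k + \<alpha> k *s z k"
  using steps by auto

lemma feasible_iterate: "k \<le> N \<Longrightarrow> feasible A b u (x k)"
proof (induction k)
  case (Suc k)
  then show ?case using sd_step_feasible(2)[OF sd_step_at] x_Suc by simp
qed (use x0 in simp)

lemma ratio_antitone: "k \<le> j \<Longrightarrow> j < N \<Longrightarrow> sd_ratio c (z j) \<le> sd_ratio c (z k)"
proof (induction j rule: dec_induct)
  case (step j)
  then have jN: "j < N" by simp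
  note next_step = sd_step_at[OF step.prems]
  have "feasible A b u (x j + \<alpha> j *s z j + z (Suc j))"
    using sd_step_feasible(1)[OF next_step] x_Suc[OF jN] by simp
  then have "sd_ratio c (z (Suc j)) \<le> sd_ratio c (z j)"
    using sd_step_ratio_antitone[OF sd_step_at[OF jN] feasible_iterate sd_step_direction(1)[OF next_step]] jN
    by simp
  then show ?case using step by simp
qed simp

lemma iterate_telescope:
  assumes "i \<le> j" "j \<le> N" shows "x j - x i = (\<Sum>m = i..<j. \<alpha> m *s z m)"
proof -
  have "x j - x i = (\<Sum>m = i..<j. x (Suc m) - x m)" using sum_Suc_diff'[OF assms(1), of x] by simp
  also have "\<dots> = (\<Sum>m = i..<j. \<alpha> m *s z m)" using assms x_Suc by (intro sum.cong) auto
  finally show ?thesis .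
qed

lemma directions_distinct:
  assumes ij: "i < j" "j < N" shows "z i \<noteq> z j"
proof
  assume eq: "z i = z j"
  define \<rho> where "\<rho> = sd_ratio c (z i)"
  define W where "W = x j - x (Suc i)"
  have ratio_const: "sd_ratio c (z m) = \<rho>" if "i \<le> m" "m \<le> j" for m
    using ratio_antitone[of i m] ratio_antitone[of m j] that ij eq unfolding \<rho>_def by fastforce
  have W_sum: "W = (\<Sum>m = Suc i..<j. \<alpha> m *s z m)"
    using iterate_telescope[of "Suc i" j] ij unfolding W_def by simp
  have "\<rho> * real_of_int (norm1 W) \<le> - real_of_int (idot c W)"
    unfolding W_sum
  proof (rule sum_exact_ratio_gain)
    show "\<rho> \<ge> 0" using sd_step_direction(4)[OF sd_step_at, of i] ij unfolding \<rho>_def by simp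
    fix m assume m: "m \<in> {Suc i..<j}"
    then have "m < N" and "sd_ratio c (z m) = \<rho>" using ij ratio_const by auto
    moreover from \<open>m < N\<close> have "z m \<noteq> 0" "\<alpha> m \<ge> 0"
      using sd_step_direction(2)[OF sd_step_at] sd_step_length_pos[OF sd_step_at] by fastforce+
    ultimately show "- real_of_int (idot c (\<alpha> m *s z m)) = \<rho> * real_of_int (norm1 (\<alpha> m *s z m))"
      using sd_ratio_gain_smult[of "z m" "\<alpha> m" c] by simp
  qed
  moreover have "x i + ((\<alpha> i + 1) *s z i + W) = x j + z j"
    using x_Suc[of i] ij eq unfolding W_def by (simp add: algebra_simps)
  then have "feasible A b u (x i + ((\<alpha> i + 1) *s z i + W))"
    using sd_step_feasible(1)[OF sd_step_at[of j]] ij by simp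
  ultimately show False
    using sd_step_no_tight_extension[OF sd_step_at[of i] feasible_iterate[of i]] ij
    unfolding \<rho>_def by simp
qed

lemma length_le_card_graver: "N \<le> card (graver A)"
proof -
  have "inj_on z {..<N}" using directions_distinct by (metis inj_onI lessThan_iff linorder_neqE_nat)
  moreover have "z ` {..<N} \<subseteq> graver A" using sd_step_direction(1)[OF sd_step_at] by auto
  ultimately show ?thesis using card_inj_on_le[OF _ _ graver_finite] by fastforce
qed

text \<open>When the method stops, the ratio bound 0 holds for all feasible moves: optimality.\<close>

lemma stop_optimal:
  assumes stops: "sd_stops A b u c (x N)" shows "optimal A b u c (x N)"
proof -
  have fN: "feasible A b u (x N)" using feasible_iterate by simp
  have "\<forall>g\<in>graver A. feasible A b u (x N + g) \<longrightarrow>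
          - real_of_int (idot c g) \<le> 0 * real_of_int (norm1 g)"
    using stops graver_kernel_nonzero sd_ratio_le_iff unfolding sd_stops_def by blast
  then have "idot c (x N) \<le> idot c y" if "feasible A b u y" for y
    using feasible_ratio_bound[OF fN, of c 0 "y - x N"] that by (simp add: idot_diff)
  with fN show ?thesis unfolding optimal_def by blast
qed

end

theorem corollary7:
  fixes A :: "int ^ 'n ^ 'd" and b :: "int ^ 'd" and c u :: "int ^ 'n"
    and x z :: "nat \<Rightarrow> int ^ 'n" and \<alpha> :: "nat \<Rightarrow> int" and N :: nat
  assumes u_nonneg: "\<forall>i. 0 \<le> u $ i"
    and x0: "feasible A b u (x 0)"
    and steps: "\<forall>k<N. sd_step A b u c (x k) (z k) (\<alpha> k) \<and> x (Suc k) = x k + \<alpha> k *s z k"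
  shows "(\<forall>i<N. \<forall>j<N. i \<noteq> j \<longrightarrow> z i \<noteq> z j)
       \<and> N \<le> card (graver A)
       \<and> (sd_stops A b u c (x N) \<longrightarrow> optimal A b u c (x N))"
proof -
  interpret run: sd_run A b c u x z \<alpha> N using x0 steps by unfold_locales
  have "z i \<noteq> z j" if "i < N" "j < N" "i \<noteq> j" for i j
    using run.directions_distinct that by (metis linorder_neqE_nat)
  then show ?thesis using run.length_le_card_graver run.stop_optimal by blast
qed

end
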